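(* If $\Phi$ is a depth-bounded fuzzy simulation between fuzzy automata $\mathcal{A}$ and $\mathcal{A}'$, then $\|\Phi\|_{\mathcal{A},\mathcal{A}'}\le S(\mathbf{L}(\mathcal{A}),\mathbf{L}(\mathcal{A}'))$.
   Context: $\mathcal{L}=\langle L,\le,\otimes,\Rightarrow,0,1\rangle$ is a complete residuated lattice: $\langle L,\le,0,1\rangle$ is a complete lattice with least element $0$ and greatest element $1$, $\langle L,\otimes,1\rangle$ is a commutative monoid, and $x\otimes y\le z$ iff $x\le (y\Rightarrow z)$. Fuzzy sets/relations are maps into $L$ ordered pointwise; $\varphi^{-1}(b,a)=\varphi(a,b)$; $(\varphi\circ\psi)(a,c)=\bigvee_b\varphi(a,b)\otimes\psi(b,c)$, $(f\circ\varphi)(b)=\bigvee_a f(a)\otimes\varphi(a,b)$, $(\varphi\circ g)(a)=\bigvee_b\varphi(a,b)\otimes g(b)$; $S(g,f)=\bigwedge_a(g(a)\Rightarrow f(a))$. A fuzzy automaton over $\Sigma$ is $\mathcal{A}=\langle A,\delta^{\mathcal{A}},\sigma^{\mathcal{A}},\tau^{\mathcal{A}}\rangle$ with $A$ nonempty, $\delta^{\mathcal{A}}:A\times\Sigma\times A\to L$, $\sigma^{\mathcal{A}},\tau^{\mathcal{A}}:A\to L$; $\delta^{\mathcal{A}}_s(x,y)=\delta^{\mathcal{A}}(x,s,y)$; similarly $\mathcal{A}'$ with states $A'$. $\mathbf{L}(\mathcal{A})(s_1\cdots s_k)=\sigma^{\mathcal{A}}\circ\delta^{\mathcal{A}}_{s_1}\circ\cdots\circ\delta^{\mathcal{A}}_{s_k}\circ\tau^{\mathcal{A}}$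 for words in $\Sigma^*$. $\|\varphi\|_{\mathcal{A},\mathcal{A}'}=S(\sigma^{\mathcal{A}},\sigma^{\mathcal{A}'}\circ\varphi^{-1})$. A depth-bounded fuzzy simulation between $\mathcal{A}$ and $\mathcal{A}'$ is a sequence $\Phi=(\varphi_n)_{n\in\mathbb{N}}$ of fuzzy relations $A\times A'\to L$ with $\varphi_n\le\varphi_{n-1}$ ($n\ge1$), $\varphi_0^{-1}\circ\tau^{\mathcal{A}}\le\tau^{\mathcal{A}'}$, and $\varphi_n^{-1}\circ\delta^{\mathcal{A}}_s\le\delta^{\mathcal{A}'}_s\circ\varphi_{n-1}^{-1}$ for all $s\in\Sigma$, $n\ge1$; its norm is $\|\Phi\|_{\mathcal{A},\mathcal{A}'}=\bigwedge_n\|\varphi_n\|_{\mathcal{A},\mathcal{A}'}$. *)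

theory Defs
  imports Main
begin

text \<open>Complete residuated lattice: complete lattice with a commutative monoid
  (multiplication = otimes, 1 = unit) whose unit is the top element, and a residuum.
  The least element 0 is bot.\<close>
class complete_residuated_lattice = complete_lattice + comm_monoid_mult +
  fixes residuum :: "'a \<Rightarrow> 'a \<Rightarrow> 'a"
  assumes one_is_top: "1 = top"
    and residuation: "x * y \<le> z \<longleftrightarrow> x \<le> residuum y z"

definition fconv :: "('a \<Rightarrow> 'b \<Rightarrow> 'l) \<Rightarrow> 'b \<Rightarrow> 'a \<Rightarrow> 'l" where
  "fconv \<phi> b a = \<phi> a b"

definition rel_comp :: "('a \<Rightarrow> 'b \<Rightarrow> 'l::complete_residuated_lattice) \<Rightarrow> ('b \<Rightarrow> 'c \<Rightarrow> 'l) \<Rightarrow> 'a \<Rightarrow> 'c \<Rightarrow> 'l" where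
  "rel_comp \<phi> \<psi> a c = (SUP b. \<phi> a b * \<psi> b c)"

definition set_rel_comp :: "('a \<Rightarrow> 'l::complete_residuated_lattice) \<Rightarrow> ('a \<Rightarrow> 'b \<Rightarrow> 'l) \<Rightarrow> 'b \<Rightarrow> 'l" where
  "set_rel_comp f \<phi> b = (SUP a. f a * \<phi> a b)"

definition rel_set_comp :: "('a \<Rightarrow> 'b \<Rightarrow> 'l::complete_residuated_lattice) \<Rightarrow> ('b \<Rightarrow> 'l) \<Rightarrow> 'a \<Rightarrow> 'l" where
  "rel_set_comp \<phi> g a = (SUP b. \<phi> a b * g b)"

definition subsethood :: "('a \<Rightarrow> 'l::complete_residuated_lattice) \<Rightarrow> ('a \<Rightarrow> 'l) \<Rightarrow> 'l" where
  "subsethood g f = (INF a. residuum (g a) (f a))"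

fun run :: "('a \<Rightarrow> 's \<Rightarrow> 'a \<Rightarrow> 'l::complete_residuated_lattice) \<Rightarrow> ('a \<Rightarrow> 'l) \<Rightarrow> 's list \<Rightarrow> 'a \<Rightarrow> 'l" where
  "run \<delta> \<tau> [] = \<tau>"
| "run \<delta> \<tau> (s # w) = rel_set_comp (\<lambda>x y. \<delta> x s y) (run \<delta> \<tau> w)"

definition lang :: "('a \<Rightarrow> 's \<Rightarrow> 'a \<Rightarrow> 'l::complete_residuated_lattice) \<Rightarrow> ('a \<Rightarrow> 'l) \<Rightarrow> ('a \<Rightarrow> 'l) \<Rightarrow> 's list \<Rightarrow> 'l" where
  "lang \<delta> \<sigma> \<tau> w = (SUP a. \<sigma> a * run \<delta> \<tau> w a)"

definition rel_norm :: "('a \<Rightarrow> 'l::complete_residuated_lattice) \<Rightarrow> ('b \<Rightarrow> 'l) \<Rightarrow> ('a \<Rightarrow> 'b \<Rightarrow> 'l) \<Rightarrow> 'l" where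
  "rel_norm \<sigma> \<sigma>' \<phi> = subsethood \<sigma> (set_rel_comp \<sigma>' (fconv \<phi>))"

definition depth_bounded_fuzzy_sim ::
  "('a \<Rightarrow> 's \<Rightarrow> 'a \<Rightarrow> 'l::complete_residuated_lattice) \<Rightarrow> ('a \<Rightarrow> 'l)
   \<Rightarrow> ('b \<Rightarrow> 's \<Rightarrow> 'b \<Rightarrow> 'l) \<Rightarrow> ('b \<Rightarrow> 'l) \<Rightarrow> (nat \<Rightarrow> 'a \<Rightarrow> 'b \<Rightarrow> 'l) \<Rightarrow> bool" where
  "depth_bounded_fuzzy_sim \<delta> \<tau> \<delta>' \<tau>' \<Phi> \<longleftrightarrow>
     (\<forall>n\<ge>1. \<Phi> n \<le> \<Phi> (n - 1)) \<and>
     rel_set_comp (fconv (\<Phi> 0)) \<tau> \<le> \<tau>' \<and>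
     (\<forall>s. \<forall>n\<ge>1. rel_comp (fconv (\<Phi> n)) (\<lambda>x y. \<delta> x s y)
                  \<le> rel_comp (\<lambda>x y. \<delta>' x s y) (fconv (\<Phi> (n - 1))))"

definition seq_norm :: "('a \<Rightarrow> 'l::complete_residuated_lattice) \<Rightarrow> ('b \<Rightarrow> 'l) \<Rightarrow> (nat \<Rightarrow> 'a \<Rightarrow> 'b \<Rightarrow> 'l) \<Rightarrow> 'l" where
  "seq_norm \<sigma> \<sigma>' \<Phi> = (INF n. rel_norm \<sigma> \<sigma>' (\<Phi> n))"

end

theory Submission
  imports Defs
begin

text \<open>By induction on the word w, the simulation condition at depth n lets the
  relation phi_n be pushed through the first letter of w at the cost of one unit
  of depth, and the terminal condition on phi_0 (together with antitonicity)
  handles the empty word; hence phi_n^-1 o delta_w o tau <= delta'_w o tau'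
  whenever |w| <= n. Combining this for n = |w| with the degree
  ||phi_n|| * sigma <= sigma' o phi_n^-1 bounds ||Phi|| * L(A)(w) by L(A')(w),
  which by residuation is the claim.\<close>

lemma residuated_mult_mono:
  fixes a b c d :: "'l::complete_residuated_lattice"
  assumes "a \<le> b" and "c \<le> d"
  shows "a * c \<le> b * d"
proof -
  have right_mono: "x * z \<le> y * z" if "x \<le> y" for x y z :: 'l
    using that order_trans residuation by blast
  have "a * c \<le> b * c" using right_mono[OF \<open>a \<le> b\<close>] .
  also have "\<dots> \<le> b * d" using right_mono[OF \<open>c \<le> d\<close>] by (simp add: mult.commute)
  finally show ?thesis .
qed

lemma mult_SUP: "(x::'l::complete_residuated_lattice) * (SUP i. f i) = (SUP i. x * f i)"
proof (rule antisym)
  have "f i * x \<le> (SUP i. x * f i)" for i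
    using SUP_upper[of i UNIV "\<lambda>i. x * f i"] by (simp add: mult.commute)
  then have "(SUP i. f i) * x \<le> (SUP i. x * f i)"
    by (simp only: residuation SUP_least)
  then show "x * (SUP i. f i) \<le> (SUP i. x * f i)" by (simp add: mult.commute)
  show "(SUP i. x * f i) \<le> x * (SUP i. f i)"
    by (rule SUP_least, rule residuated_mult_mono) (simp_all add: SUP_upper)
qed

lemma SUP_mult: "(SUP i. f i) * (x::'l::complete_residuated_lattice) = (SUP i. f i * x)"
  using mult_SUP[of x f] by (simp add: mult.commute)

lemma subsethood_mult_le: "subsethood g f * g a \<le> f a"
  unfolding residuation subsethood_def by (rule INF_lower) simp

lemma le_subsethoodI:
  assumes "\<And>a. c * g a \<le> f a"
  shows "c \<le> subsethood g f"
  unfolding subsethood_def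
  using assms by (simp add: INF_greatest flip: residuation)

lemma rel_set_comp_mono:
  assumes "\<phi> \<le> \<psi>" and "f \<le> g"
  shows "rel_set_comp \<phi> f \<le> rel_set_comp \<psi> g"
  using assms unfolding rel_set_comp_def le_fun_def
  by (auto intro!: SUP_mono residuated_mult_mono)

lemma rel_set_comp_assoc:
  "rel_set_comp (rel_comp \<phi> \<psi>) g = rel_set_comp \<phi> (rel_set_comp \<psi> g)"
proof
  fix a
  have "(SUP c. (SUP b. \<phi> a b * \<psi> b c) * g c) = (SUP c. SUP b. \<phi> a b * (\<psi> b c * g c))"
    by (simp add: SUP_mult mult.assoc)
  also have "\<dots> = (SUP b. \<phi> a b * (SUP c. \<psi> b c * g c))"
    by (subst SUP_commute) (simp add: mult_SUP)
  finally show "rel_set_comp (rel_comp \<phi> \<psi>) g a = rel_set_comp \<phi> (rel_set_comp \<psi> g) a"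
    unfolding rel_set_comp_def rel_comp_def .
qed

lemma SUP_set_rel_comp_mult:
  "(SUP a. set_rel_comp f \<phi> a * g a) = (SUP b. f b * rel_set_comp \<phi> g b)"
proof -
  have "(SUP a. (SUP b. f b * \<phi> b a) * g a) = (SUP a. SUP b. f b * (\<phi> b a * g a))"
    by (simp add: SUP_mult mult.assoc)
  also have "\<dots> = (SUP b. f b * (SUP a. \<phi> b a * g a))"
    by (subst SUP_commute) (simp add: mult_SUP)
  finally show ?thesis unfolding set_rel_comp_def rel_set_comp_def .
qed

lemma depth_bounded_fuzzy_sim_antimono:
  assumes "depth_bounded_fuzzy_sim \<delta> \<tau> \<delta>' \<tau>' \<Phi>" and "m \<le> n"
  shows "\<Phi> n \<le> \<Phi> m"
proof (rule lift_Suc_antimono_le[OF _ \<open>m \<le> n\<close>])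
  fix k
  show "\<Phi> (Suc k) \<le> \<Phi> k"
    using assms(1) unfolding depth_bounded_fuzzy_sim_def by (metis diff_Suc_1 le_add1 plus_1_eq_Suc)
qed

lemma depth_bounded_fuzzy_sim_run:
  assumes sim: "depth_bounded_fuzzy_sim \<delta> \<tau> \<delta>' \<tau>' \<Phi>"
    and "length w \<le> n"
  shows "rel_set_comp (fconv (\<Phi> n)) (run \<delta> \<tau> w) \<le> run \<delta>' \<tau>' w"
  using \<open>length w \<le> n\<close>
proof (induction w arbitrary: n)
  case Nil
  have "rel_set_comp (fconv (\<Phi> n)) \<tau> \<le> rel_set_comp (fconv (\<Phi> 0)) \<tau>"
    using depth_bounded_fuzzy_sim_antimono[OF sim, of 0 n]
    by (intro rel_set_comp_mono) (auto simp: fconv_def le_fun_def)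
  also have "\<dots> \<le> \<tau>'"
    using sim unfolding depth_bounded_fuzzy_sim_def by blast
  finally show ?case by simp
next
  case (Cons s w)
  then obtain m where n: "n = Suc m" and "length w \<le> m"
    by (cases n) auto
  have step: "rel_comp (fconv (\<Phi> n)) (\<lambda>x y. \<delta> x s y) \<le> rel_comp (\<lambda>x y. \<delta>' x s y) (fconv (\<Phi> m))"
    using sim unfolding depth_bounded_fuzzy_sim_def n by (metis diff_Suc_1 le_add1 plus_1_eq_Suc)
  have "rel_set_comp (fconv (\<Phi> n)) (run \<delta> \<tau> (s # w))
      = rel_set_comp (rel_comp (fconv (\<Phi> n)) (\<lambda>x y. \<delta> x s y)) (run \<delta> \<tau> w)"
    by (simp add: rel_set_comp_assoc)
  also have "\<dots> \<le> rel_set_comp (rel_comp (\<lambda>x y. \<delta>' x s y) (fconv (\<Phi> m))) (run \<delta> \<tau> w)"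
    using step by (intro rel_set_comp_mono) simp_all
  also have "\<dots> = rel_set_comp (\<lambda>x y. \<delta>' x s y) (rel_set_comp (fconv (\<Phi> m)) (run \<delta> \<tau> w))"
    by (rule rel_set_comp_assoc)
  also have "\<dots> \<le> run \<delta>' \<tau>' (s # w)"
    using Cons.IH[OF \<open>length w \<le> m\<close>] by (simp add: rel_set_comp_mono)
  finally show ?case .
qed

theorem mainTheorem7:
  fixes \<delta> :: "'a \<Rightarrow> 's \<Rightarrow> 'a \<Rightarrow> 'l::complete_residuated_lattice"
    and \<sigma> \<tau> :: "'a \<Rightarrow> 'l"
    and \<delta>' :: "'b \<Rightarrow> 's \<Rightarrow> 'b \<Rightarrow> 'l"
    and \<sigma>' \<tau>' :: "'b \<Rightarrow> 'l"
    and \<Phi> :: "nat \<Rightarrow> 'a \<Rightarrow> 'b \<Rightarrow> 'l"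
  assumes "depth_bounded_fuzzy_sim \<delta> \<tau> \<delta>' \<tau>' \<Phi>"
  shows "seq_norm \<sigma> \<sigma>' \<Phi> \<le> subsethood (lang \<delta> \<sigma> \<tau>) (lang \<delta>' \<sigma>' \<tau>')"
proof (rule le_subsethoodI)
  fix w :: "'s list"
  let ?N = "seq_norm \<sigma> \<sigma>' \<Phi>" and ?\<phi> = "\<Phi> (length w)"
  have "?N \<le> rel_norm \<sigma> \<sigma>' ?\<phi>"
    unfolding seq_norm_def by (rule INF_lower) simp
  then have "?N * \<sigma> a \<le> set_rel_comp \<sigma>' (fconv ?\<phi>) a" for a
    using subsethood_mult_le[of \<sigma> _ a] order_trans residuated_mult_mono[OF _ order_refl]
    unfolding rel_norm_def by metis
  then have "?N * lang \<delta> \<sigma> \<tau> w \<le> (SUP a. set_rel_comp \<sigma>' (fconv ?\<phi>) a * run \<delta> \<tau> w a)"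
    unfolding lang_def mult_SUP mult.assoc[symmetric]
    by (intro SUP_mono) (auto intro: residuated_mult_mono)
  also have "\<dots> = (SUP b. \<sigma>' b * rel_set_comp (fconv ?\<phi>) (run \<delta> \<tau> w) b)"
    by (rule SUP_set_rel_comp_mult)
  also have "\<dots> \<le> lang \<delta>' \<sigma>' \<tau>' w"
    using depth_bounded_fuzzy_sim_run[OF assms order_refl]
    unfolding lang_def le_fun_def by (intro SUP_mono) (auto intro: residuated_mult_mono)
  finally show "?N * lang \<delta> \<sigma> \<tau> w \<le> lang \<delta>' \<sigma>' \<tau>' w" .
qed

end
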